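(* Let $d\ge 1$, $\delta>0$, $N\ge1$. Let $\varphi_1,\dots,\varphi_N$ be i.i.d. random vectors uniformly distributed on $\mathbb{S}^{d-1}$, and let $\epsilon_1,\dots,\epsilon_N$ be i.i.d. uniform on $[-\delta,\delta]$, independent of the $\varphi_n$. Let $\psi\in\mathbb{S}^{d-1}$, $P_N=\bigcap_{n=1}^N\{u\in\mathbb{R}^d: |\langle u,\varphi_n\rangle-\epsilon_n|\le\delta\}$ and $R_N(\psi)=\sup\{r\ge0: r\psi\in P_N\}$. Let $\xi$ be uniform on $[0,2\delta]$ and $Z=|\langle e_0,\varphi\rangle|$, where $e_0=(1,0,\dots,0)\in\mathbb{R}^d$ and $\varphi$ is uniformly distributed on $\mathbb{S}^{d-1}$, with $\xi$ and $Z$ independent, and set $X=\xi/Z$. Let $X_1,\dots,X_N$ be independent copies of $X$ and $Y_N=\min\{X_n:1\le n\le N\}$. Then $R_N(\psi)$ has the same distribution as $Y_N$.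
   Context: Here $\mathbb{S}^{d-1}$ is the unit sphere in $\mathbb{R}^d$; "uniformly distributed" refers to normalized surface measure. *)

theory Defs
  imports "HOL-Probability.Probability"
begin

text \<open>Normalized surface measure on the unit sphere (uniform distribution on S^{d-1}),
  defined as the cone measure: sigma(A) = lambda({x in B : x/|x| in A}) / lambda(B),
  i.e. the push-forward of the uniform distribution on the open unit ball under radial projection.\<close>
definition uniform_sphere :: "'a::euclidean_space measure" where
  "uniform_sphere = distr (uniform_measure lborel (ball 0 1)) borel (\<lambda>x. x /\<^sub>R norm x)"

definition polytope_P :: "nat \<Rightarrow> real \<Rightarrow> (nat \<Rightarrow> 'a::euclidean_space) \<Rightarrow> (nat \<Rightarrow> real) \<Rightarrow> 'a set" where
  "polytope_P N \<delta> phi eps = (\<Inter>n\<in>{1..N}. {u. \<bar>inner u (phi n) - eps n\<bar> \<le> \<delta>})"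

definition radial_R :: "nat \<Rightarrow> real \<Rightarrow> (nat \<Rightarrow> 'a::euclidean_space) \<Rightarrow> (nat \<Rightarrow> real) \<Rightarrow> 'a \<Rightarrow> ereal" where
  "radial_R N \<delta> phi eps psi = Sup {ereal r | r. r \<ge> 0 \<and> r *\<^sub>R psi \<in> polytope_P N \<delta> phi eps}"

definition law_X :: "real \<Rightarrow> 'a::euclidean_space \<Rightarrow> real measure" where
  "law_X \<delta> e0 = distr (uniform_measure lborel {0..2*\<delta>} \<Otimes>\<^sub>M (uniform_sphere :: 'a measure)) borel
     (\<lambda>(s, v). s / \<bar>inner e0 v\<bar>)"

definition law_Y :: "nat \<Rightarrow> real \<Rightarrow> 'a::euclidean_space \<Rightarrow> real measure" where
  "law_Y N \<delta> e0 = distr (\<Pi>\<^sub>M i\<in>{1..N}. law_X \<delta> e0) borel (\<lambda>x. Min (x ` {1..N}))"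

end

theory Submission
  imports Defs
begin

text \<open>
  Along the ray \<open>r \<psi>\<close>, the \<open>n\<close>-th constraint \<open>|r \<langle>\<psi>, \<phi>\<^sub>n\<rangle> - \<epsilon>\<^sub>n| \<le> \<delta>\<close> holds exactly up to the exit time
  \<open>(\<delta> \<plusminus> \<epsilon>\<^sub>n) / |\<langle>\<psi>, \<phi>\<^sub>n\<rangle>|\<close>, the sign being that of \<open>\<langle>\<psi>, \<phi>\<^sub>n\<rangle>\<close>; almost surely \<open>\<langle>\<psi>, \<phi>\<^sub>n\<rangle> \<noteq> 0\<close> and
  \<open>|\<epsilon>\<^sub>n| \<le> \<delta>\<close>, so \<open>R\<^sub>N(\<psi>)\<close> is the minimum of \<open>N\<close> independent exit times. Each exit time has the law
  of \<open>X\<close>: conditionally on \<open>\<phi>\<^sub>n\<close>, the numerator \<open>\<delta> \<plusminus> \<epsilon>\<^sub>n\<close> is uniform on \<open>[0, 2\<delta>]\<close>, and \<open>|\<langle>\<psi>, \<phi>\<rangle>|\<close> has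
  the law of \<open>|\<langle>e\<^sub>0, \<phi>\<rangle>|\<close> because an orthogonal map preserving Lebesgue measure sends \<open>\<psi>\<close> to \<open>\<plusminus>e\<^sub>0\<close>.
  Such a map is built from Givens rotations, each of which is a product of three shears.
\<close>

section \<open>Lebesgue measure is invariant under shears and rotations\<close>

lemma nn_integral_PiM_lborel_shear:
  fixes I :: "'i set" and a :: real
  assumes fin: "finite I" and iI: "i \<notin> I" and jI: "j \<in> I"
    and f[measurable]: "f \<in> borel_measurable (PiM (insert i I) (\<lambda>_. lborel :: real measure))"
  shows "(\<integral>\<^sup>+x. f (x(i := x i + a * x j)) \<partial>PiM (insert i I) (\<lambda>_. lborel)) =
         (\<integral>\<^sup>+x. f x \<partial>PiM (insert i I) (\<lambda>_. lborel))"
proof -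
  have ji: "j \<noteq> i"
    using iI jI by auto
  interpret product_sigma_finite "\<lambda>_. lborel :: real measure"
    by (simp add: product_sigma_finite_def lborel.sigma_finite_measure_axioms)
  have "(\<lambda>x. x(i := x i + a * x j)) \<in> PiM (insert i I) (\<lambda>_. lborel) \<rightarrow>\<^sub>M PiM (insert i I) (\<lambda>_. lborel)"
  proof (rule measurable_PiM_single')
    fix k assume "k \<in> insert i I"
    then show "(\<lambda>x. (x(i := x i + a * x j)) k) \<in> PiM (insert i I) (\<lambda>_. lborel) \<rightarrow>\<^sub>M lborel"
      using jI by (cases "k = i") auto
  qed (auto simp: space_PiM)
  then have g: "(\<lambda>x. f (x(i := x i + a * x j))) \<in> borel_measurable (PiM (insert i I) (\<lambda>_. lborel))"
    by measurable
  have "(\<integral>\<^sup>+x. f (x(i := x i + a * x j)) \<partial>PiM (insert i I) (\<lambda>_. lborel))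
      = (\<integral>\<^sup>+x. (\<integral>\<^sup>+y. f (x(i := a * x j + 1 * y)) \<partial>lborel) \<partial>PiM I (\<lambda>_. lborel))"
    using ji by (subst product_nn_integral_insert[OF fin iI g]) (simp add: add.commute)
  also have "\<dots> = (\<integral>\<^sup>+x. (\<integral>\<^sup>+y. f (x(i := y)) \<partial>lborel) \<partial>PiM I (\<lambda>_. lborel))"
  proof (rule nn_integral_cong)
    fix x assume x: "x \<in> space (PiM I (\<lambda>_. lborel :: real measure))"
    have "(\<lambda>y. f (x(i := y))) \<in> borel_measurable borel"
      using measurable_comp[OF measurable_component_update[OF x iI] f] by (simp add: comp_def)
    from nn_integral_real_affine[OF this, of 1 "a * x j"]
    show "(\<integral>\<^sup>+y. f (x(i := a * x j + 1 * y)) \<partial>lborel) = (\<integral>\<^sup>+y. f (x(i := y)) \<partial>lborel)"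
      by simp
  qed
  also have "\<dots> = (\<integral>\<^sup>+x. f x \<partial>PiM (insert i I) (\<lambda>_. lborel))"
    by (rule product_nn_integral_insert[OF fin iI f, symmetric])
  finally show ?thesis .
qed

lemma sum_Basis_fun_upd:
  fixes x :: "'a::euclidean_space \<Rightarrow> real"
  assumes "e \<in> Basis"
  shows "(\<Sum>k\<in>Basis. (x(e := y)) k *\<^sub>R k) = (\<Sum>k\<in>Basis. x k *\<^sub>R k) + (y - x e) *\<^sub>R e"
proof -
  have "(\<Sum>k\<in>Basis. (x(e := y)) k *\<^sub>R k) = y *\<^sub>R e + (\<Sum>k\<in>Basis - {e}. x k *\<^sub>R k)"
    using assms by (subst sum.remove[of _ e]) (auto intro!: sum.cong)
  moreover have "(\<Sum>k\<in>Basis. x k *\<^sub>R k) = x e *\<^sub>R e + (\<Sum>k\<in>Basis - {e}. x k *\<^sub>R k)"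
    using assms by (subst sum.remove[of _ e]) auto
  ultimately show ?thesis by (simp add: algebra_simps)
qed

lemma inner_sum_Basis_scaleR:
  fixes x :: "'a::euclidean_space \<Rightarrow> real"
  assumes "b \<in> Basis"
  shows "(\<Sum>k\<in>Basis. x k *\<^sub>R k) \<bullet> b = x b"
  using assms by (simp add: inner_sum_left inner_Basis if_distrib cong: if_cong)

lemma distr_self_eqI:
  assumes T[measurable]: "T \<in> M \<rightarrow>\<^sub>M M"
    and eq: "\<And>f. f \<in> borel_measurable M \<Longrightarrow> (\<integral>\<^sup>+x. f (T x) \<partial>M) = (\<integral>\<^sup>+x. f x \<partial>M)"
  shows "distr M M T = M"
proof (rule measure_eqI)
  fix A assume "A \<in> sets (distr M M T)"
  then have [measurable]: "A \<in> sets M" by simp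
  have "emeasure (distr M M T) A = (\<integral>\<^sup>+x. indicator A (T x) \<partial>M)"
    by (simp add: nn_integral_indicator[symmetric] nn_integral_distr del: nn_integral_indicator)
  also have "\<dots> = emeasure M A"
    by (simp add: eq)
  finally show "emeasure (distr M M T) A = emeasure M A" .
qed simp

definition shear :: "'a::euclidean_space \<Rightarrow> 'a \<Rightarrow> real \<Rightarrow> 'a \<Rightarrow> 'a" where
  "shear e b a v = v + (a * (v \<bullet> b)) *\<^sub>R e"

lemma shear_measurable [measurable]: "shear e b a \<in> borel_measurable borel"
  unfolding shear_def by measurable

lemma lborel_distr_shear:
  fixes e b :: "'a::euclidean_space"
  assumes e: "e \<in> Basis" and b: "b \<in> Basis" and "e \<noteq> b"
  shows "distr lborel borel (shear e b a) = lborel"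
proof -
  let ?S = "\<lambda>x::'a \<Rightarrow> real. \<Sum>k\<in>Basis. x k *\<^sub>R k"
  have Basis: "Basis = insert e (Basis - {e})" and b': "b \<in> Basis - {e}"
    using assms by auto
  have "(\<integral>\<^sup>+x. f (x + (a * (x \<bullet> b)) *\<^sub>R e) \<partial>lborel) = (\<integral>\<^sup>+x. f x \<partial>lborel)"
    if [measurable]: "f \<in> borel_measurable lborel" for f :: "'a \<Rightarrow> ennreal"
  proof -
    have "(\<integral>\<^sup>+x. f (x + (a * (x \<bullet> b)) *\<^sub>R e) \<partial>lborel)
        = (\<integral>\<^sup>+x. f (?S (x(e := x e + a * x b))) \<partial>PiM Basis (\<lambda>_. lborel))"
      by (subst lborel_eq)
         (simp add: nn_integral_distr sum_Basis_fun_upd[OF e] inner_sum_Basis_scaleR[OF b] del: fun_upd_apply)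
    also have "\<dots> = (\<integral>\<^sup>+x. f (?S x) \<partial>PiM Basis (\<lambda>_. lborel))"
      using nn_integral_PiM_lborel_shear[of "Basis - {e}" e b "\<lambda>x. f (?S x)" a] b'
      unfolding Basis[symmetric] by simp
    also have "\<dots> = (\<integral>\<^sup>+x. f x \<partial>lborel)"
      by (subst (2) lborel_eq) (simp add: nn_integral_distr)
    finally show ?thesis .
  qed
  then have "distr lborel lborel (\<lambda>v. v + (a * (v \<bullet> b)) *\<^sub>R e) = lborel"
    by (intro distr_self_eqI) auto
  then show ?thesis
    by (simp add: shear_def[abs_def] cong: distr_cong)
qed

definition givens :: "'a::euclidean_space \<Rightarrow> 'a \<Rightarrow> real \<Rightarrow> real \<Rightarrow> 'a \<Rightarrow> 'a" where
  "givens e b c s v =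
     v + ((c - 1) * (v \<bullet> e) - s * (v \<bullet> b)) *\<^sub>R e + (s * (v \<bullet> e) + (c - 1) * (v \<bullet> b)) *\<^sub>R b"

lemma inner_givens_Basis:
  fixes e b :: "'a::euclidean_space"
  assumes e: "e \<in> Basis" and b: "b \<in> Basis" and "e \<noteq> b"
  shows "givens e b c s v \<bullet> e = c * (v \<bullet> e) - s * (v \<bullet> b)"
    and "givens e b c s v \<bullet> b = s * (v \<bullet> e) + c * (v \<bullet> b)"
    and "k \<in> Basis \<Longrightarrow> k \<noteq> e \<Longrightarrow> k \<noteq> b \<Longrightarrow> givens e b c s v \<bullet> k = v \<bullet> k"
  using assms by (auto simp: givens_def inner_Basis algebra_simps)

lemma orthogonal_transformation_givens:
  fixes e b :: "'a::euclidean_space"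
  assumes e: "e \<in> Basis" and b: "b \<in> Basis" and eb: "e \<noteq> b" and cs: "c\<^sup>2 + s\<^sup>2 = 1"
  shows "orthogonal_transformation (givens e b c s)"
  unfolding orthogonal_transformation_def
proof
  show "linear (givens e b c s)"
    by (rule linearI) (simp_all add: givens_def algebra_simps)
  have [simp]: "e \<bullet> b = 0" "b \<bullet> e = 0" "e \<bullet> e = 1" "b \<bullet> b = 1"
    using e b eb by (auto simp: inner_Basis)
  have "givens e b c s v \<bullet> givens e b c s w
      = v \<bullet> w + (c\<^sup>2 + s\<^sup>2 - 1) * ((v \<bullet> e) * (w \<bullet> e) + (v \<bullet> b) * (w \<bullet> b))" for v w
    by (simp add: givens_def inner_commute algebra_simps power2_eq_square)
  then show "\<forall>v w. givens e b c s v \<bullet> givens e b c s w = v \<bullet> w"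
    using cs by simp
qed

text \<open>Paeth's factorisation of a rotation into three shears, which transfers the shear invariance
  of Lebesgue measure to rotations.\<close>

lemma givens_eq_shears:
  fixes e b :: "'a::euclidean_space"
  assumes e: "e \<in> Basis" and b: "b \<in> Basis" and eb: "e \<noteq> b"
    and cs: "c\<^sup>2 + s\<^sup>2 = 1" and c: "c \<noteq> -1"
  defines "t \<equiv> s / (1 + c)"
  shows "givens e b c s = shear e b (- t) \<circ> shear b e s \<circ> shear e b (- t)"
proof
  fix v
  have tc: "t * (1 + c) = s"
    using c by (simp add: t_def add_eq_0_iff)
  have ts: "t * s = 1 - c"
  proof -
    have "t * s * (1 + c) = (1 - c) * (1 + c)"
      using tc cs by (simp add: algebra_simps power2_eq_square)
    then show ?thesis
      using c by (simp add: add_eq_0_iff)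
  qed
  have [simp]: "e \<bullet> b = 0" "b \<bullet> e = 0" "e \<bullet> e = 1" "b \<bullet> b = 1"
    using e b eb by (auto simp: inner_Basis)
  define p q where "p = v \<bullet> e" and "q = v \<bullet> b"
  have coeff_e: "- t * q + - t * (q + s * (p - t * q)) = (c - 1) * p - s * q"
  proof -
    have "- t * q + - t * (q + s * (p - t * q)) = - (t * s) * p - t * (2 - t * s) * q"
      by (simp add: algebra_simps)
    also have "\<dots> = (c - 1) * p - (t * (1 + c)) * q"
      unfolding ts by (simp add: algebra_simps)
    finally show ?thesis
      by (simp add: tc)
  qed
  have coeff_b: "s * (p - t * q) = s * p + (c - 1) * q"
  proof -
    have "s * (p - t * q) = s * p - (t * s) * q"
      by (simp add: algebra_simps)
    then show ?thesis
      unfolding ts by (simp add: algebra_simps)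
  qed
  have "(shear e b (- t) \<circ> shear b e s \<circ> shear e b (- t)) v
      = v + (- t * q) *\<^sub>R e + (s * (p - t * q)) *\<^sub>R b + (- t * (q + s * (p - t * q))) *\<^sub>R e"
    by (simp add: shear_def inner_add_left inner_diff_left p_def q_def)
  also have "\<dots> = v + (- t * q + - t * (q + s * (p - t * q))) *\<^sub>R e + (s * (p - t * q)) *\<^sub>R b"
    by (simp only: scaleR_add_left add_ac)
  finally show "givens e b c s v = (shear e b (- t) \<circ> shear b e s \<circ> shear e b (- t)) v"
    unfolding coeff_e unfolding coeff_b by (simp add: givens_def p_def q_def)
qed

lemma lborel_distr_comp:
  assumes [measurable]: "f \<in> borel_measurable borel" "g \<in> borel_measurable borel"
    and "distr lborel borel f = (lborel :: 'a::euclidean_space measure)" "distr lborel borel g = lborel"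
  shows "distr lborel borel (f \<circ> g) = lborel"
proof -
  have "distr lborel borel (f \<circ> g) = distr (distr lborel borel g) borel f"
    by (simp add: distr_distr)
  also have "\<dots> = lborel"
    using assms(3,4) by (simp cong: distr_cong)
  finally show ?thesis .
qed

lemma lborel_distr_givens:
  fixes e b :: "'a::euclidean_space"
  assumes e: "e \<in> Basis" and b: "b \<in> Basis" and eb: "e \<noteq> b"
    and cs: "c\<^sup>2 + s\<^sup>2 = 1" and c: "c \<noteq> -1"
  shows "distr lborel borel (givens e b c s) = lborel"
  unfolding givens_eq_shears[OF assms]
  using assms by (intro lborel_distr_comp lborel_distr_shear) auto

lemma givens_zero_coordinate:
  fixes e b u :: "'a::euclidean_space"
  assumes e: "e \<in> Basis" and b: "b \<in> Basis" and eb: "e \<noteq> b"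
  obtains c s where "c\<^sup>2 + s\<^sup>2 = 1" "c \<noteq> -1" "givens e b c s u \<bullet> b = 0"
proof (cases "u \<bullet> b = 0")
  case True
  then show ?thesis
    using inner_givens_Basis(2)[OF assms] by (intro that[of 1 0]) auto
next
  case False
  define r where "r = sqrt ((u \<bullet> e)\<^sup>2 + (u \<bullet> b)\<^sup>2)"
  have r: "r > 0" "r\<^sup>2 = (u \<bullet> e)\<^sup>2 + (u \<bullet> b)\<^sup>2"
    using False by (auto simp: r_def add_nonneg_pos)
  show ?thesis
  proof (rule that[of "(u \<bullet> e) / r" "- (u \<bullet> b) / r"])
    show cs: "((u \<bullet> e) / r)\<^sup>2 + (- (u \<bullet> b) / r)\<^sup>2 = 1"
      using r False by (simp add: power_divide add_divide_distrib[symmetric])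
    show "(u \<bullet> e) / r \<noteq> -1"
    proof
      assume "(u \<bullet> e) / r = -1"
      with cs have "(u \<bullet> b / r)\<^sup>2 = 0"
        by simp
      with False r show False
        by simp
    qed
    show "givens e b ((u \<bullet> e) / r) (- (u \<bullet> b) / r) u \<bullet> b = 0"
      using r False by (simp add: inner_givens_Basis(2)[OF assms] field_simps)
  qed
qed

lemma borel_measurable_orthogonal_transformation [measurable_dest]:
  "orthogonal_transformation T \<Longrightarrow> T \<in> borel_measurable (borel :: 'a::euclidean_space measure)"
  by (intro borel_measurable_continuous_onI linear_continuous_on)
     (simp add: linear_conv_bounded_linear[symmetric] orthogonal_transformation_linear)

lemma lborel_isometry_to_axis:
  fixes e u :: "'a::euclidean_space"
  assumes e: "e \<in> Basis"
  obtains T where "orthogonal_transformation T" "distr lborel borel T = lborel"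
    "\<forall>k\<in>Basis - {e}. T u \<bullet> k = 0"
proof -
  have "\<forall>u. (\<forall>k\<in>Basis - insert e S. u \<bullet> k = 0) \<longrightarrow>
      (\<exists>T. orthogonal_transformation T \<and> distr lborel borel T = lborel \<and> (\<forall>k\<in>Basis - {e}. T u \<bullet> k = 0))"
    if "finite S" "S \<subseteq> Basis - {e}" for S
    using that
  proof (induction S rule: finite_subset_induct)
    case empty
    then show ?case
      by (auto intro!: exI[of _ "\<lambda>x. x"] simp: distr_id2)
  next
    case (insert b S)
    show ?case
    proof (intro allI impI)
      fix u :: 'a assume u: "\<forall>k\<in>Basis - insert e (insert b S). u \<bullet> k = 0"
      have b: "b \<in> Basis" "e \<noteq> b"
        using insert by auto
      obtain c s where cs: "c\<^sup>2 + s\<^sup>2 = 1" "c \<noteq> -1" and Gb: "givens e b c s u \<bullet> b = 0"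
        using givens_zero_coordinate[OF e b] .
      let ?G = "givens e b c s"
      have "\<forall>k\<in>Basis - insert e S. ?G u \<bullet> k = 0"
      proof
        fix k assume "k \<in> Basis - insert e S"
        then show "?G u \<bullet> k = 0"
          using u Gb inner_givens_Basis(3)[OF e b, of k] by (cases "k = b") auto
      qed
      then obtain T where T: "orthogonal_transformation T" "distr lborel borel T = lborel"
        and Tu: "\<forall>k\<in>Basis - {e}. T (?G u) \<bullet> k = 0"
        using insert.IH by blast
      have G: "orthogonal_transformation ?G" "distr lborel borel ?G = lborel"
        using orthogonal_transformation_givens[OF e b cs(1)] lborel_distr_givens[OF e b cs] by auto
      have "orthogonal_transformation (T \<circ> ?G)" "distr lborel borel (T \<circ> ?G) = lborel"
        using T G by (auto intro: orthogonal_transformation_compose lborel_distr_comp)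
      with Tu show "\<exists>T. orthogonal_transformation T \<and> distr lborel borel T = lborel \<and>
          (\<forall>k\<in>Basis - {e}. T u \<bullet> k = 0)"
        by (intro exI[of _ "T \<circ> ?G"]) auto
    qed
  qed
  from this[of "Basis - {e}"] that show thesis
    by auto
qed

section \<open>The uniform distribution on the sphere\<close>

lemma distr_uniform_measure:
  assumes T[measurable]: "T \<in> M \<rightarrow>\<^sub>M N" and TM: "distr M N T = M'" and sets: "sets M' = sets N"
    and B: "B \<in> sets N" and A: "T -` B \<inter> space M = A"
  shows "distr (uniform_measure M A) N T = uniform_measure M' B"
proof (rule measure_eqI)
  show "sets (distr (uniform_measure M A) N T) = sets (uniform_measure M' B)"
    using sets by simp
  fix X assume "X \<in> sets (distr (uniform_measure M A) N T)"
  then have X: "X \<in> sets N"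
    by simp
  have preimage: "emeasure M (T -` Y \<inter> space M) = emeasure M' Y" if "Y \<in> sets N" for Y
    using that by (simp flip: TM add: emeasure_distr)
  have denominator: "emeasure M A = emeasure M' B"
    using preimage[OF B] by (simp add: A)
  have A_sets: "A \<in> sets M"
    using measurable_sets[OF T B] by (simp add: A)
  have "emeasure (distr (uniform_measure M A) N T) X = emeasure (uniform_measure M A) (T -` X \<inter> space M)"
    using X by (subst emeasure_distr) (simp_all cong: measurable_cong_sets)
  also have "\<dots> = emeasure M (A \<inter> (T -` X \<inter> space M)) / emeasure M A"
    using X A_sets by (intro emeasure_uniform_measure) auto
  also have "A \<inter> (T -` X \<inter> space M) = T -` (B \<inter> X) \<inter> space M"
    using A by auto
  also have "emeasure M (T -` (B \<inter> X) \<inter> space M) / emeasure M A = emeasure M' (B \<inter> X) / emeasure M' B"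
    using denominator preimage[of "B \<inter> X"] X B by simp
  also have "\<dots> = emeasure (uniform_measure M' B) X"
    using X B sets by simp
  finally show "emeasure (distr (uniform_measure M A) N T) X = emeasure (uniform_measure M' B) X" .
qed

abbreviation uniform_ball :: "'a::euclidean_space measure" where
  "uniform_ball \<equiv> uniform_measure lborel (ball 0 1)"

lemma prob_space_uniform_ball: "prob_space (uniform_ball :: 'a::euclidean_space measure)"
proof (rule prob_space_uniform_measure)
  show "emeasure lborel (ball (0::'a) 1) \<noteq> \<infinity>"
    using emeasure_lborel_ball_finite[of "0::'a" 1] by simp
  have "measure lborel (ball (0::'a) 1) > 0"
    by (rule content_ball_pos) simp
  then show "emeasure lborel (ball (0::'a) 1) \<noteq> 0"
    by (auto simp: measure_def)
qed

lemma prob_space_uniform_sphere: "prob_space (uniform_sphere :: 'a::euclidean_space measure)"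
  unfolding uniform_sphere_def
  by (rule prob_space.prob_space_distr[OF prob_space_uniform_ball]) measurable

lemma sets_uniform_sphere [simp, measurable_cong]:
  "sets (uniform_sphere :: 'a::euclidean_space measure) = sets borel"
  by (simp add: uniform_sphere_def)

lemma space_uniform_sphere [simp]: "space (uniform_sphere :: 'a::euclidean_space measure) = UNIV"
  by (simp add: uniform_sphere_def)

lemma AE_uniform_sphere_inner_nonzero:
  fixes psi :: "'a::euclidean_space"
  assumes "psi \<noteq> 0"
  shows "AE v in uniform_sphere. psi \<bullet> v \<noteq> 0"
proof -
  have "negligible {x::'a. psi \<bullet> x = 0}"
    using assms by (intro negligible_hyperplane) simp
  moreover have "{x::'a. psi \<bullet> x = 0} \<in> sets borel"
    by measurable
  ultimately have "{x::'a. psi \<bullet> x = 0} \<in> null_sets lborel"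
    by (simp add: negligible_iff_null_sets null_sets_completion_iff)
  then have "AE x in uniform_ball. psi \<bullet> x \<noteq> 0"
    by (intro AE_uniform_measureI) (auto dest: AE_not_in)
  then have "AE x in uniform_ball. psi \<bullet> (x /\<^sub>R norm x) \<noteq> 0"
    by eventually_elim auto
  then show ?thesis
    unfolding uniform_sphere_def by (subst AE_distr_iff) auto
qed

lemma distr_uniform_sphere_isometry:
  fixes T :: "'a::euclidean_space \<Rightarrow> 'a"
  assumes T: "orthogonal_transformation T" and TM: "distr lborel borel T = lborel"
  shows "distr uniform_sphere borel T = uniform_sphere"
proof -
  have [measurable]: "T \<in> borel_measurable borel"
    using T by measurable
  have "T -` ball 0 1 = ball 0 1"
    using T by (auto simp: orthogonal_transformation_norm)
  then have ball: "distr uniform_ball borel T = (uniform_ball :: 'a measure)"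
    using TM by (intro distr_uniform_measure) auto
  have normalize: "T (x /\<^sub>R norm x) = T x /\<^sub>R norm (T x)" for x
    using T by (simp add: orthogonal_transformation_scaleR orthogonal_transformation_norm)
  have "distr uniform_sphere borel T = distr uniform_ball borel (\<lambda>x. T (x /\<^sub>R norm x))"
    unfolding uniform_sphere_def by (subst distr_distr) (auto simp: comp_def cong: measurable_cong_sets)
  also have "\<dots> = distr (distr uniform_ball borel T) borel (\<lambda>x. x /\<^sub>R norm x)"
    unfolding normalize by (subst distr_distr) (auto simp: comp_def cong: measurable_cong_sets)
  finally show ?thesis
    unfolding ball uniform_sphere_def .
qed

lemma distr_uniform_sphere_abs_inner:
  fixes psi e :: "'a::euclidean_space"
  assumes psi: "norm psi = 1" and e: "e \<in> Basis"
  shows "distr uniform_sphere borel (\<lambda>v. \<bar>psi \<bullet> v\<bar>) = distr uniform_sphere borel (\<lambda>v. \<bar>e \<bullet> v\<bar>)"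
proof -
  obtain T where T: "orthogonal_transformation T" "distr lborel borel T = lborel"
    and Tpsi: "\<forall>k\<in>Basis - {e}. T psi \<bullet> k = 0"
    using lborel_isometry_to_axis[OF e] .
  have [measurable]: "T \<in> borel_measurable borel"
    using T(1) by measurable
  have "T psi = (\<Sum>k\<in>Basis. (T psi \<bullet> k) *\<^sub>R k)"
    by (simp add: euclidean_representation)
  also have "\<dots> = (T psi \<bullet> e) *\<^sub>R e"
    using e Tpsi by (subst sum.remove[of _ e]) auto
  finally have axis: "T psi = (T psi \<bullet> e) *\<^sub>R e" .
  have "\<bar>T psi \<bullet> e\<bar> = norm (T psi)"
    by (subst (2) axis) (simp add: e)
  also have "\<dots> = 1"
    using psi T(1) by (simp add: orthogonal_transformation_norm)
  finally have unit: "\<bar>T psi \<bullet> e\<bar> = 1" .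
  have abs_inner: "\<bar>psi \<bullet> v\<bar> = \<bar>e \<bullet> T v\<bar>" for v
  proof -
    have "psi \<bullet> v = T psi \<bullet> T v"
      using T(1) by (simp add: orthogonal_transformation_def)
    also have "\<dots> = (T psi \<bullet> e) * (e \<bullet> T v)"
      by (subst axis) simp
    finally show ?thesis
      by (simp add: abs_mult unit)
  qed
  have "distr uniform_sphere borel (\<lambda>v. \<bar>psi \<bullet> v\<bar>) = distr uniform_sphere borel ((\<lambda>w. \<bar>e \<bullet> w\<bar>) \<circ> T)"
    by (simp only: comp_def abs_inner)
  also have "\<dots> = distr (distr uniform_sphere borel T) borel (\<lambda>w. \<bar>e \<bullet> w\<bar>)"
    by (rule distr_distr[symmetric]) simp_all
  finally show ?thesis
    unfolding distr_uniform_sphere_isometry[OF T] .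
qed

section \<open>The law of a single exit time\<close>

lemma prob_space_uniform_Icc:
  fixes a b :: real
  shows "a < b \<Longrightarrow> prob_space (uniform_measure lborel {a..b})"
  by (intro prob_space_uniform_measure) auto

lemma lborel_distr_affine_unit:
  fixes c t :: real
  assumes "\<bar>c\<bar> = 1"
  shows "distr lborel borel (\<lambda>x. t + c * x) = lborel"
  using lborel_real_affine[of c t] assms by (auto simp: density_1)

lemma distr_uniform_sym_interval_shift:
  fixes \<delta> c :: real
  assumes "c = 1 \<or> c = -1"
  shows "distr (uniform_measure lborel {-\<delta>..\<delta>}) borel (\<lambda>x. \<delta> + c * x) = uniform_measure lborel {0..2*\<delta>}"
proof (rule distr_uniform_measure)
  show "distr lborel borel (\<lambda>x. \<delta> + c * x) = lborel"
    using assms by (intro lborel_distr_affine_unit) auto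
  show "(\<lambda>x. \<delta> + c * x) -` {0..2*\<delta>} \<inter> space lborel = {-\<delta>..\<delta>}"
    using assms by auto
qed auto

lemma distr_pair_measure_fiberwise:
  assumes S: "prob_space S" and U: "prob_space U"
    and h[measurable]: "(\<lambda>(v, x). h v x) \<in> S \<Otimes>\<^sub>M U \<rightarrow>\<^sub>M K"
    and fiber: "\<And>v. v \<in> space S \<Longrightarrow> distr U K (h v) = V"
  shows "distr (S \<Otimes>\<^sub>M U) (K \<Otimes>\<^sub>M S) (\<lambda>(v, x). (h v x, v)) = V \<Otimes>\<^sub>M S"
proof (rule sym, rule pair_measure_eqI)
  interpret S: prob_space S by fact
  interpret U: prob_space U by fact
  interpret SU: pair_prob_space S U ..
  obtain v0 where v0: "v0 \<in> space S"
    using S.not_empty by blast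
  have hv[measurable]: "h v \<in> U \<rightarrow>\<^sub>M K" if "v \<in> space S" for v
    using measurable_Pair2[OF h that] by simp
  have V: "prob_space V" and sets_V: "sets V = sets K"
    using fiber[OF v0] U.prob_space_distr[OF hv[OF v0]] by auto
  then show "sigma_finite_measure V" "sigma_finite_measure S"
    by (auto simp: prob_space_imp_sigma_finite S.sigma_finite_measure_axioms)
  show "sets (V \<Otimes>\<^sub>M S) = sets (distr (S \<Otimes>\<^sub>M U) (K \<Otimes>\<^sub>M S) (\<lambda>(v, x). (h v x, v)))"
    using sets_V by (simp cong: sets_pair_measure_cong)
  fix A B assume A: "A \<in> sets V" and B: "B \<in> sets S"
  have hm: "(\<lambda>(v, x). (h v x, v)) \<in> S \<Otimes>\<^sub>M U \<rightarrow>\<^sub>M K \<Otimes>\<^sub>M S"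
    by measurable
  have "emeasure (distr (S \<Otimes>\<^sub>M U) (K \<Otimes>\<^sub>M S) (\<lambda>(v, x). (h v x, v))) (A \<times> B)
      = (\<integral>\<^sup>+v. emeasure U (Pair v -` ((\<lambda>(v, x). (h v x, v)) -` (A \<times> B) \<inter> space (S \<Otimes>\<^sub>M U))) \<partial>S)"
    using A B sets_V by (simp add: emeasure_distr[OF hm] U.emeasure_pair_measure_alt measurable_sets[OF hm])
  also have "\<dots> = (\<integral>\<^sup>+v. emeasure V A * indicator B v \<partial>S)"
  proof (rule nn_integral_cong)
    fix v assume v: "v \<in> space S"
    have "Pair v -` ((\<lambda>(v, x). (h v x, v)) -` (A \<times> B) \<inter> space (S \<Otimes>\<^sub>M U))
        = (if v \<in> B then h v -` A \<inter> space U else {})"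
      using v by (auto simp: space_pair_measure)
    moreover have "emeasure U (h v -` A \<inter> space U) = emeasure V A"
      using A sets_V by (simp flip: fiber[OF v] add: emeasure_distr[OF hv[OF v]])
    ultimately show "emeasure U (Pair v -` ((\<lambda>(v, x). (h v x, v)) -` (A \<times> B) \<inter> space (S \<Otimes>\<^sub>M U)))
        = emeasure V A * indicator B v"
      by simp
  qed
  also have "\<dots> = emeasure V A * emeasure S B"
    using B by (simp add: nn_integral_cmult_indicator)
  finally show "emeasure V A * emeasure S B
      = emeasure (distr (S \<Otimes>\<^sub>M U) (K \<Otimes>\<^sub>M S) (\<lambda>(v, x). (h v x, v))) (A \<times> B)" ..
qed

lemma distr_pair_measure_comp_snd:
  assumes A: "sigma_finite_measure A" and Bg: "sigma_finite_measure (distr B N g)"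
    and g[measurable]: "g \<in> B \<rightarrow>\<^sub>M N" and F[measurable]: "F \<in> A \<Otimes>\<^sub>M N \<rightarrow>\<^sub>M K"
  shows "distr (A \<Otimes>\<^sub>M B) K (\<lambda>(s, v). F (s, g v)) = distr (A \<Otimes>\<^sub>M distr B N g) K F"
proof -
  have "A \<Otimes>\<^sub>M distr B N g = distr A A (\<lambda>s. s) \<Otimes>\<^sub>M distr B N g"
    by simp
  also have "\<dots> = distr (A \<Otimes>\<^sub>M B) (A \<Otimes>\<^sub>M N) (\<lambda>(s, v). (s, g v))"
    using Bg by (intro pair_measure_distr) auto
  finally show ?thesis
    by (simp add: distr_distr comp_def split_beta')
qed

text \<open>The largest \<open>r \<ge> 0\<close> with \<open>|r \<langle>\<psi>, v\<rangle> - x| \<le> \<delta>\<close>, provided \<open>\<langle>\<psi>, v\<rangle> \<noteq> 0\<close> and \<open>|x| \<le> \<delta>\<close>.\<close>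

definition slab_exit :: "real \<Rightarrow> 'a::euclidean_space \<Rightarrow> 'a \<times> real \<Rightarrow> real" where
  "slab_exit \<delta> psi = (\<lambda>(v, x). (if psi \<bullet> v \<ge> 0 then \<delta> + x else \<delta> - x) / \<bar>psi \<bullet> v\<bar>)"

lemma slab_exit_measurable [measurable]: "slab_exit \<delta> psi \<in> borel_measurable (borel \<Otimes>\<^sub>M borel)"
  unfolding slab_exit_def by measurable

lemma law_X_eq_distr_slab_exit:
  fixes psi e0 :: "'a::euclidean_space"
  assumes \<delta>: "\<delta> > 0" and psi: "norm psi = 1" and e0: "e0 \<in> Basis"
  shows "law_X \<delta> e0 = distr (uniform_sphere \<Otimes>\<^sub>M uniform_measure lborel {-\<delta>..\<delta>}) borel (slab_exit \<delta> psi)"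
proof -
  let ?S = "uniform_sphere :: 'a measure" and ?U = "uniform_measure lborel {-\<delta>..\<delta>}"
    and ?U' = "uniform_measure lborel {0..2*\<delta>}"
  interpret S: prob_space ?S
    by (rule prob_space_uniform_sphere)
  have U: "prob_space ?U" and U': "prob_space ?U'"
    using \<delta> by (simp_all add: prob_space_uniform_Icc)
  have quotient: "distr (?U' \<Otimes>\<^sub>M ?S) borel (\<lambda>(s, v). s / \<bar>w \<bullet> v\<bar>)
      = distr (?U' \<Otimes>\<^sub>M distr ?S borel (\<lambda>v. \<bar>w \<bullet> v\<bar>)) borel (\<lambda>(s, z). s / z)" for w :: 'a
    using distr_pair_measure_comp_snd[of ?U' ?S borel "\<lambda>v. \<bar>w \<bullet> v\<bar>" "\<lambda>(s, z). s / z" borel] U'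
    by (simp add: prob_space_imp_sigma_finite S.prob_space_distr)
  have fiber: "distr ?U borel (\<lambda>x. if psi \<bullet> v \<ge> 0 then \<delta> + x else \<delta> - x) = ?U'" for v
    using distr_uniform_sym_interval_shift[of 1 \<delta>] distr_uniform_sym_interval_shift[of "-1" \<delta>]
    by (cases "psi \<bullet> v \<ge> 0") simp_all
  have flip: "distr (?S \<Otimes>\<^sub>M ?U) (borel \<Otimes>\<^sub>M ?S) (\<lambda>(v, x). (if psi \<bullet> v \<ge> 0 then \<delta> + x else \<delta> - x, v))
      = ?U' \<Otimes>\<^sub>M ?S"
    by (intro distr_pair_measure_fiberwise[where h="\<lambda>v x. if psi \<bullet> v \<ge> 0 then \<delta> + x else \<delta> - x"]
          S.prob_space_axioms U fiber) measurable
  have "law_X \<delta> e0 = distr (?U' \<Otimes>\<^sub>M ?S) borel (\<lambda>(s, v). s / \<bar>e0 \<bullet> v\<bar>)"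
    by (simp add: law_X_def)
  also have "\<dots> = distr (?U' \<Otimes>\<^sub>M ?S) borel (\<lambda>(s, v). s / \<bar>psi \<bullet> v\<bar>)"
    by (simp only: quotient distr_uniform_sphere_abs_inner[OF psi e0])
  also have "\<dots> = distr (?S \<Otimes>\<^sub>M ?U) borel (slab_exit \<delta> psi)"
    unfolding flip[symmetric]
    by (subst distr_distr) (auto simp: slab_exit_def comp_def split_beta')
  finally show ?thesis .
qed

lemma AE_sphere_uniform_nondegenerate:
  fixes psi :: "'a::euclidean_space" and \<delta> :: real
  assumes \<delta>: "\<delta> > 0" and psi: "psi \<noteq> 0"
  shows "AE (v, x) in uniform_sphere \<Otimes>\<^sub>M uniform_measure lborel {-\<delta>..\<delta>}. psi \<bullet> v \<noteq> 0 \<and> \<bar>x\<bar> \<le> \<delta>"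
proof -
  interpret S: prob_space "uniform_sphere :: 'a measure"
    by (rule prob_space_uniform_sphere)
  interpret U: prob_space "uniform_measure lborel {-\<delta>..\<delta>}"
    using \<delta> by (intro prob_space_uniform_Icc) simp
  interpret SU: pair_prob_space "uniform_sphere :: 'a measure" "uniform_measure lborel {-\<delta>..\<delta>}" ..
  have interval: "AE x in uniform_measure lborel {-\<delta>..\<delta>}. \<bar>x\<bar> \<le> \<delta>"
    by (intro AE_uniform_measureI) auto
  show ?thesis
  proof (rule SU.AE_pair_measure)
    from AE_uniform_sphere_inner_nonzero[OF psi]
    show "AE v in uniform_sphere. AE x in uniform_measure lborel {-\<delta>..\<delta>}.
        case (v, x) of (v, x) \<Rightarrow> psi \<bullet> v \<noteq> 0 \<and> \<bar>x\<bar> \<le> \<delta>"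
      by eventually_elim (use interval in auto)
  qed measurable
qed

section \<open>The radial function as a minimum of exit times\<close>

definition slab_lower :: "real \<Rightarrow> real \<Rightarrow> real \<Rightarrow> ereal" where
  "slab_lower \<delta> a e =
     (if a > 0 then ereal ((e - \<delta>) / a) else if a < 0 then ereal ((e + \<delta>) / a) else -\<infinity>)"

definition slab_upper :: "real \<Rightarrow> real \<Rightarrow> real \<Rightarrow> ereal" where
  "slab_upper \<delta> a e =
     (if a > 0 then ereal ((e + \<delta>) / a) else if a < 0 then ereal ((e - \<delta>) / a) else \<infinity>)"

lemma abs_le_iff_slab_bounds:
  "\<bar>r * a - e\<bar> \<le> \<delta> \<longleftrightarrow>
     (a \<noteq> 0 \<or> \<bar>e\<bar> \<le> \<delta>) \<and> slab_lower \<delta> a e \<le> ereal r \<and> ereal r \<le> slab_upper \<delta> a e"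
  by (cases a "0::real" rule: linorder_cases)
     (auto simp: slab_lower_def slab_upper_def abs_le_iff field_simps)

text \<open>A closed form for the radial function that is valid for every sample, degenerate ones
  included: the law of \<open>R\<^sub>N(\<psi>)\<close> only makes sense once \<open>R\<^sub>N(\<psi>)\<close> is measurable everywhere.\<close>

definition ray_sup :: "real \<Rightarrow> nat set \<Rightarrow> (nat \<Rightarrow> real) \<Rightarrow> (nat \<Rightarrow> real) \<Rightarrow> ereal" where
  "ray_sup \<delta> I a e =
     (if (\<forall>n\<in>I. a n \<noteq> 0 \<or> \<bar>e n\<bar> \<le> \<delta>) \<and>
         max 0 (Max ((\<lambda>n. slab_lower \<delta> (a n) (e n)) ` I)) \<le> Min ((\<lambda>n. slab_upper \<delta> (a n) (e n)) ` I)
      then Min ((\<lambda>n. slab_upper \<delta> (a n) (e n)) ` I) else -\<infinity>)"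

lemma Sup_ereal_between:
  fixes L H :: ereal
  assumes "L \<le> H" "0 \<le> L" "L < \<infinity>"
  shows "Sup {ereal r |r. L \<le> ereal r \<and> ereal r \<le> H} = H"
proof (cases H)
  case (real h)
  with assms have "H \<in> {ereal r |r. L \<le> ereal r \<and> ereal r \<le> H}"
    by auto
  then have "H \<le> Sup {ereal r |r. L \<le> ereal r \<and> ereal r \<le> H}"
    by (rule Sup_upper)
  moreover have "Sup {ereal r |r. L \<le> ereal r \<and> ereal r \<le> H} \<le> H"
    by (auto intro!: Sup_least)
  ultimately show ?thesis
    by simp
next
  case PInf
  obtain l where l: "L = ereal l"
    using assms by (cases L) auto
  have "\<exists>y\<in>{ereal r |r. L \<le> ereal r \<and> ereal r \<le> H}. x < y" if "x < top" for x
  proof (cases x)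
    case (real r)
    then show ?thesis
      by (intro bexI[of _ "ereal (max l (r + 1))"]) (auto simp: l PInf max_def)
  next
    case MInf
    then show ?thesis
      by (intro bexI[of _ "ereal l"]) (auto simp: l PInf)
  qed (use that in simp)
  then have "Sup {ereal r |r. L \<le> ereal r \<and> ereal r \<le> H} = top"
    unfolding Sup_eq_top_iff by blast
  then show ?thesis
    using PInf by (simp add: top_ereal_def)
next
  case MInf
  with assms show ?thesis
    by simp
qed

lemma Sup_ray_feasible_eq_ray_sup:
  fixes a e :: "nat \<Rightarrow> real"
  assumes I: "finite I" "I \<noteq> {}"
  shows "Sup {ereal r |r. r \<ge> 0 \<and> (\<forall>n\<in>I. \<bar>r * a n - e n\<bar> \<le> \<delta>)} = ray_sup \<delta> I a e"
proof -
  let ?L = "max 0 (Max ((\<lambda>n. slab_lower \<delta> (a n) (e n)) ` I))"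
  let ?H = "Min ((\<lambda>n. slab_upper \<delta> (a n) (e n)) ` I)"
  let ?ok = "\<forall>n\<in>I. a n \<noteq> 0 \<or> \<bar>e n\<bar> \<le> \<delta>"
  have feasible_iff: "r \<ge> 0 \<and> (\<forall>n\<in>I. \<bar>r * a n - e n\<bar> \<le> \<delta>) \<longleftrightarrow> ?ok \<and> ?L \<le> ereal r \<and> ereal r \<le> ?H" for r
    using I by (auto simp: abs_le_iff_slab_bounds)
  have "Max ((\<lambda>n. slab_lower \<delta> (a n) (e n)) ` I) < \<infinity>"
    using I by (subst Max_less_iff) (auto simp: slab_lower_def)
  then have L: "0 \<le> ?L" "?L < \<infinity>"
    by (auto simp: max_def)
  show ?thesis
  proof (cases "?ok \<and> ?L \<le> ?H")
    case True
    then show ?thesis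
      unfolding feasible_iff using Sup_ereal_between[of ?L ?H] L by (simp add: ray_sup_def)
  next
    case False
    have "\<not> (r \<ge> 0 \<and> (\<forall>n\<in>I. \<bar>r * a n - e n\<bar> \<le> \<delta>))" for r
    proof
      assume "r \<ge> 0 \<and> (\<forall>n\<in>I. \<bar>r * a n - e n\<bar> \<le> \<delta>)"
      then have ok: ?ok and below: "?L \<le> ereal r" and above: "ereal r \<le> ?H"
        unfolding feasible_iff by auto
      from below above have "?L \<le> ?H"
        by (rule order.trans)
      with ok False show False
        by blast
    qed
    then have empty: "{ereal r |r. r \<ge> 0 \<and> (\<forall>n\<in>I. \<bar>r * a n - e n\<bar> \<le> \<delta>)} = {}"
      by blast
    have "ray_sup \<delta> I a e = -\<infinity>"
      unfolding ray_sup_def by (rule if_not_P[OF False])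
    then show ?thesis
      unfolding empty by (simp add: bot_ereal_def)
  qed
qed

lemma ray_sup_eq_Min:
  fixes a e :: "nat \<Rightarrow> real"
  assumes I: "finite I" "I \<noteq> {}" and nondegenerate: "\<And>n. n \<in> I \<Longrightarrow> a n \<noteq> 0 \<and> \<bar>e n\<bar> \<le> \<delta>"
  shows "ray_sup \<delta> I a e = ereal (Min ((\<lambda>n. (if a n \<ge> 0 then \<delta> + e n else \<delta> - e n) / \<bar>a n\<bar>) ` I))"
proof -
  let ?g = "\<lambda>n. (if a n \<ge> 0 then \<delta> + e n else \<delta> - e n) / \<bar>a n\<bar>"
  have "slab_upper \<delta> (a n) (e n) = ereal (?g n)" if "n \<in> I" for n
    using nondegenerate[OF that] by (auto simp: slab_upper_def field_simps)
  then have "(\<lambda>n. slab_upper \<delta> (a n) (e n)) ` I = ereal ` ?g ` I"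
    by (auto simp: image_image)
  also have "Min (ereal ` ?g ` I) = ereal (Min (?g ` I))"
    using I by (intro mono_Min_commute[symmetric]) (auto simp: mono_def)
  finally have upper: "Min ((\<lambda>n. slab_upper \<delta> (a n) (e n)) ` I) = ereal (Min (?g ` I))" .
  have "slab_lower \<delta> (a n) (e n) \<le> 0" if "n \<in> I" for n
    using nondegenerate[OF that] by (auto simp: slab_lower_def divide_nonpos_pos divide_nonneg_neg)
  then have lower: "max 0 (Max ((\<lambda>n. slab_lower \<delta> (a n) (e n)) ` I)) = 0"
    using I by (simp add: max_absorb1)
  have "0 \<le> ?g n" if "n \<in> I" for n
    using nondegenerate[OF that] by (auto simp: abs_le_iff)
  then have "0 \<le> Min (?g ` I)"
    using I by simp
  with nondegenerate show ?thesis
    by (simp add: ray_sup_def upper lower)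
qed

lemma ray_sup_measurable [measurable]:
  fixes a e :: "nat \<Rightarrow> 'm \<Rightarrow> real"
  assumes "finite I"
    and [measurable]: "\<And>n. n \<in> I \<Longrightarrow> a n \<in> borel_measurable M" "\<And>n. n \<in> I \<Longrightarrow> e n \<in> borel_measurable M"
  shows "(\<lambda>\<omega>. ray_sup \<delta> I (\<lambda>n. a n \<omega>) (\<lambda>n. e n \<omega>)) \<in> borel_measurable M"
proof -
  have [measurable]: "(\<lambda>\<omega>. slab_lower \<delta> (a n \<omega>) (e n \<omega>)) \<in> borel_measurable M"
    "(\<lambda>\<omega>. slab_upper \<delta> (a n \<omega>) (e n \<omega>)) \<in> borel_measurable M" if "n \<in> I" for n
    using that unfolding slab_lower_def slab_upper_def by measurable
  show ?thesis
    unfolding ray_sup_def using assms(1) by measurable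
qed

lemma radial_R_eq_ray_sup:
  assumes "N \<ge> 1"
  shows "radial_R N \<delta> phi eps psi = ray_sup \<delta> {1..N} (\<lambda>n. psi \<bullet> phi n) eps"
proof -
  have "r *\<^sub>R psi \<in> polytope_P N \<delta> phi eps \<longleftrightarrow> (\<forall>n\<in>{1..N}. \<bar>r * (psi \<bullet> phi n) - eps n\<bar> \<le> \<delta>)" for r
    by (simp add: polytope_P_def)
  then show ?thesis
    unfolding radial_R_def using Sup_ray_feasible_eq_ray_sup[of "{1..N}"] assms by simp
qed

lemma radial_R_eq_Min_slab_exit:
  assumes "N \<ge> 1" and nondegenerate: "\<And>n. n \<in> {1..N} \<Longrightarrow> psi \<bullet> phi n \<noteq> 0 \<and> \<bar>eps n\<bar> \<le> \<delta>"
  shows "radial_R N \<delta> phi eps psi = ereal (Min ((\<lambda>n. slab_exit \<delta> psi (phi n, eps n)) ` {1..N}))"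
proof -
  have "ray_sup \<delta> {1..N} (\<lambda>n. psi \<bullet> phi n) eps
      = ereal (Min ((\<lambda>n. (if psi \<bullet> phi n \<ge> 0 then \<delta> + eps n else \<delta> - eps n) / \<bar>psi \<bullet> phi n\<bar>) ` {1..N}))"
    using assms by (intro ray_sup_eq_Min) auto
  then show ?thesis
    by (simp add: radial_R_eq_ray_sup[OF assms(1)] slab_exit_def)
qed

section \<open>Independent exit times\<close>

lemma (in prob_space) distr_restrict_indep_vars:
  assumes I: "I \<noteq> {}" and indep: "indep_vars (\<lambda>_. N) X I"
    and law: "\<And>i. i \<in> I \<Longrightarrow> distr M N (X i) = \<mu>"
    and F[measurable]: "F \<in> PiM I (\<lambda>_. N) \<rightarrow>\<^sub>M K"
  shows "distr M K (\<lambda>\<omega>. F (\<lambda>i\<in>I. X i \<omega>)) = distr (PiM I (\<lambda>_. \<mu>)) K F"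
proof -
  have X: "X i \<in> M \<rightarrow>\<^sub>M N" if "i \<in> I" for i
    using indep that by (auto simp: indep_vars_def)
  then have XI: "(\<lambda>\<omega>. \<lambda>i\<in>I. X i \<omega>) \<in> M \<rightarrow>\<^sub>M PiM I (\<lambda>_. N)"
    by (intro measurable_restrict) auto
  have "distr M (PiM I (\<lambda>_. N)) (\<lambda>\<omega>. \<lambda>i\<in>I. X i \<omega>) = PiM I (\<lambda>i. distr M N (X i))"
    using indep_vars_iff_distr_eq_PiM'[OF I, where M'="\<lambda>_. N" and X=X] indep X by simp
  also have "\<dots> = PiM I (\<lambda>_. \<mu>)"
    using law by (intro PiM_cong) auto
  finally have product: "distr M (PiM I (\<lambda>_. N)) (\<lambda>\<omega>. \<lambda>i\<in>I. X i \<omega>) = PiM I (\<lambda>_. \<mu>)" .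
  have "distr M K (\<lambda>\<omega>. F (\<lambda>i\<in>I. X i \<omega>)) = distr (distr M (PiM I (\<lambda>_. N)) (\<lambda>\<omega>. \<lambda>i\<in>I. X i \<omega>)) K F"
    using XI by (simp add: distr_distr comp_def)
  then show ?thesis
    by (simp only: product)
qed

lemma distr_slab_exit_sample:
  fixes phi :: "'m \<Rightarrow> 'a::euclidean_space" and eps :: "'m \<Rightarrow> real" and psi e0 :: 'a
  assumes "\<delta> > 0" "norm psi = 1" "e0 \<in> Basis"
    and sample[measurable]: "(\<lambda>\<omega>. (phi \<omega>, eps \<omega>)) \<in> M \<rightarrow>\<^sub>M borel \<Otimes>\<^sub>M borel"
    and law: "distr M (borel \<Otimes>\<^sub>M borel) (\<lambda>\<omega>. (phi \<omega>, eps \<omega>))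
      = (uniform_sphere :: 'a measure) \<Otimes>\<^sub>M uniform_measure lborel {-\<delta>..\<delta>}"
  shows "distr M borel (\<lambda>\<omega>. slab_exit \<delta> psi (phi \<omega>, eps \<omega>)) = law_X \<delta> e0"
proof -
  have "distr M borel (\<lambda>\<omega>. slab_exit \<delta> psi (phi \<omega>, eps \<omega>))
      = distr (distr M (borel \<Otimes>\<^sub>M borel) (\<lambda>\<omega>. (phi \<omega>, eps \<omega>))) borel (slab_exit \<delta> psi)"
    by (simp add: distr_distr comp_def)
  then show ?thesis
    using law_X_eq_distr_slab_exit[OF assms(1-3)] by (simp add: law)
qed

lemma AE_nondegenerate_sample:
  fixes phi :: "'m \<Rightarrow> 'a::euclidean_space" and eps :: "'m \<Rightarrow> real"
  assumes "\<delta> > 0" "psi \<noteq> 0"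
    and sample: "(\<lambda>\<omega>. (phi \<omega>, eps \<omega>)) \<in> M \<rightarrow>\<^sub>M borel \<Otimes>\<^sub>M borel"
    and law: "distr M (borel \<Otimes>\<^sub>M borel) (\<lambda>\<omega>. (phi \<omega>, eps \<omega>))
      = (uniform_sphere :: 'a measure) \<Otimes>\<^sub>M uniform_measure lborel {-\<delta>..\<delta>}"
  shows "AE \<omega> in M. psi \<bullet> phi \<omega> \<noteq> 0 \<and> \<bar>eps \<omega>\<bar> \<le> \<delta>"
proof -
  have "AE (v, x) in distr M (borel \<Otimes>\<^sub>M borel) (\<lambda>\<omega>. (phi \<omega>, eps \<omega>)). psi \<bullet> v \<noteq> 0 \<and> \<bar>x\<bar> \<le> \<delta>"
    unfolding law using assms(1,2) by (rule AE_sphere_uniform_nondegenerate)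
  then show ?thesis
    using sample by (subst (asm) AE_distr_iff) auto
qed

theorem lemma3p2:
  fixes M :: "'m measure"
    and phi :: "nat \<Rightarrow> 'm \<Rightarrow> 'a::euclidean_space"
    and eps :: "nat \<Rightarrow> 'm \<Rightarrow> real"
    and \<delta> :: real and N :: nat and psi e0 :: 'a
  assumes "prob_space M"
    and "\<delta> > 0" and "N \<ge> 1"
    and indep: "prob_space.indep_vars M (\<lambda>_. borel \<Otimes>\<^sub>M borel) (\<lambda>n \<omega>. (phi n \<omega>, eps n \<omega>)) {1..N}"
    and dist: "\<And>n. n \<in> {1..N} \<Longrightarrow>
       distr M (borel \<Otimes>\<^sub>M borel) (\<lambda>\<omega>. (phi n \<omega>, eps n \<omega>))
         = (uniform_sphere :: 'a measure) \<Otimes>\<^sub>M uniform_measure lborel {-\<delta>..\<delta>}"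
    and "norm psi = 1"
    and "e0 \<in> Basis"
  shows "distr M borel (\<lambda>\<omega>. radial_R N \<delta> (\<lambda>n. phi n \<omega>) (\<lambda>n. eps n \<omega>) psi)
         = distr (law_Y N \<delta> e0) borel ereal"
proof -
  interpret prob_space M by fact
  let ?I = "{1..N}" and ?Y = "\<lambda>n \<omega>. slab_exit \<delta> psi (phi n \<omega>, eps n \<omega>)"
  have sample: "(\<lambda>\<omega>. (phi n \<omega>, eps n \<omega>)) \<in> M \<rightarrow>\<^sub>M borel \<Otimes>\<^sub>M borel" if "n \<in> ?I" for n
    using indep that by (auto simp: indep_vars_def)
  then have [measurable]: "phi n \<in> borel_measurable M" "eps n \<in> borel_measurable M" if "n \<in> ?I" for n
    using measurable_fst''[OF sample] measurable_snd''[OF sample] that by auto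
  have indep_exits: "indep_vars (\<lambda>_. borel) ?Y ?I"
    by (rule indep_vars_compose2[OF indep]) measurable
  have law_exits: "distr M borel (?Y n) = law_X \<delta> e0" if "n \<in> ?I" for n
    using assms sample[OF that] dist[OF that] by (intro distr_slab_exit_sample) auto
  have "AE \<omega> in M. \<forall>n\<in>?I. psi \<bullet> phi n \<omega> \<noteq> 0 \<and> \<bar>eps n \<omega>\<bar> \<le> \<delta>"
    using assms sample dist by (intro AE_finite_allI AE_nondegenerate_sample) auto
  then have "AE \<omega> in M. radial_R N \<delta> (\<lambda>n. phi n \<omega>) (\<lambda>n. eps n \<omega>) psi = ereal (Min ((\<lambda>n\<in>?I. ?Y n \<omega>) ` ?I))"
    by eventually_elim (simp only: image_restrict_eq, rule radial_R_eq_Min_slab_exit, use assms in auto)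
  then have "distr M borel (\<lambda>\<omega>. radial_R N \<delta> (\<lambda>n. phi n \<omega>) (\<lambda>n. eps n \<omega>) psi)
      = distr M borel (\<lambda>\<omega>. ereal (Min ((\<lambda>n\<in>?I. ?Y n \<omega>) ` ?I)))"
    using assms by (intro distr_cong_AE) (auto simp: radial_R_eq_ray_sup)
  also have "\<dots> = distr (PiM ?I (\<lambda>_. law_X \<delta> e0)) borel (\<lambda>y. ereal (Min (y ` ?I)))"
    using assms by (intro distr_restrict_indep_vars[OF _ indep_exits law_exits]) auto
  also have "\<dots> = distr (law_Y N \<delta> e0) borel ereal"
    by (simp add: law_Y_def distr_distr comp_def law_X_def)
  finally show ?thesis .
qed

end
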